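(* Let $1\le k<n$ (or $k\le n$), $\mathcal X=\mathbb C^n$, and let $v_1>v_2>\dots>v_k>0$ and $v_{k+1}=0$. Let $\mathcal R$ be the set of $k$-tuples $(x_1,\dots,x_k)$ of orthonormal vectors in $\mathcal X$. Define the quantum score $S=(s,\mu)$ on reports $\mathcal R$ with outcomes $\{1,\dots,k+1\}$ by $\mu((x_1,\dots,x_k))=\{x_1x_1^*,\dots,x_kx_k^*,\,I-\sum_{i=1}^kx_ix_i^*\}$ and $s((x_1,\dots,x_k),y)=v_y$. Then for every $\rho\in\mathrm{Dens}(\mathcal X)$, $S((x_1,\dots,x_k);\rho)=\langle\sum_{i=1}^kv_ix_ix_i^*,\rho\rangle$, and the set of maximizers $\arg\max_{r\in\mathcal R}S(r;\rho)$ equals the set of orthonormal tuples $(x_1,\dots,x_k)$ such that $\rho x_i=\lambda_i(\rho)x_i$ for each $i=1,\dots,k$. In particular, $S$ elicits the set-valued property $\Gamma_{1..k}$.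
   Context: $\langle X,Y\rangle=\mathrm{Tr}(X^*Y)$; $\mathrm{Dens}(\mathcal X)$ the density matrices; $\lambda_i(\rho)$ the $i$-th largest eigenvalue of $\rho$. For a quantum score on a report set $\mathcal R$, $S=(s,\mu)$ with $\mu(r)$ a measurement (positive semidefinite operators summing to $I$) and expected score $S(r;\rho)=\sum_y\langle\mu(r)_y,\rho\rangle s(r,y)$. A set-valued property $\Gamma:\mathrm{Dens}(\mathcal X)\to 2^{\mathcal R}$ is elicited by $S$ if $\Gamma(\rho)=\arg\max_{r\in\mathcal R}S(r;\rho)$ for every $\rho$. $\Gamma_{1..k}(\rho)$ is the set of orthonormal $k$-tuples $(x_1,\dots,x_k)$ where $x_i$ is an eigenvector of $\rho$ with eigenvalue $\lambda_i(\rho)$. *)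

theory Defs
  imports "Jordan_Normal_Form.Schur_Decomposition" "HOL-Library.Multiset"
begin

definition mtrace :: "complex mat \<Rightarrow> complex" where
  "mtrace A = (\<Sum>i<dim_row A. A $$ (i, i))"

definition hs_inner :: "complex mat \<Rightarrow> complex mat \<Rightarrow> complex" where
  "hs_inner X Y = mtrace (mat_adjoint X * Y)"

definition density :: "nat \<Rightarrow> complex mat \<Rightarrow> bool" where
  "density n \<rho> \<longleftrightarrow> \<rho> \<in> carrier_mat n n \<and> mat_adjoint \<rho> = \<rho>
     \<and> (\<forall>w \<in> carrier_vec n. 0 \<le> Re (conjugate w \<bullet> (\<rho> *\<^sub>v w))) \<and> mtrace \<rho> = 1"

text \<open>Eigenvalues of rho (with multiplicity: the roots of the characteristic polynomial),
  sorted in decreasing order; eig_desc rho i is the i-th largest (i starting at 1).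
  For Hermitian rho all these roots are real, so taking real parts loses nothing.\<close>
definition eig_desc :: "complex mat \<Rightarrow> nat \<Rightarrow> real" where
  "eig_desc \<rho> i = rev (sorted_list_of_multiset (image_mset Re (proots (char_poly \<rho>)))) ! (i - 1)"

definition outer :: "nat \<Rightarrow> complex vec \<Rightarrow> complex mat" where
  "outer n x = mat n n (\<lambda>(a, b). x $ a * cnj (x $ b))"

text \<open>Orthonormal k-tuples in C^n, represented as lists of length k (entry i-1 is x_i).\<close>
definition orthonormal_tuples :: "nat \<Rightarrow> nat \<Rightarrow> complex vec list set" where
  "orthonormal_tuples n k = {xs. length xs = k \<and> set xs \<subseteq> carrier_vec n \<and>
      (\<forall>i<k. \<forall>j<k. xs ! i \<bullet>c xs ! j = (if i = j then 1 else 0))}"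

definition qscore_exp :: "'y set \<Rightarrow> ('r \<Rightarrow> 'y \<Rightarrow> real) \<Rightarrow> ('r \<Rightarrow> 'y \<Rightarrow> complex mat)
     \<Rightarrow> 'r \<Rightarrow> complex mat \<Rightarrow> complex" where
  "qscore_exp Y s \<mu> r \<rho> = (\<Sum>y\<in>Y. hs_inner (\<mu> r y) \<rho> * complex_of_real (s r y))"

definition qargmax :: "'r set \<Rightarrow> 'y set \<Rightarrow> ('r \<Rightarrow> 'y \<Rightarrow> real) \<Rightarrow> ('r \<Rightarrow> 'y \<Rightarrow> complex mat)
     \<Rightarrow> complex mat \<Rightarrow> 'r set" where
  "qargmax R Y s \<mu> \<rho> = {r \<in> R. \<forall>r' \<in> R. Re (qscore_exp Y s \<mu> r' \<rho>) \<le> Re (qscore_exp Y s \<mu> r \<rho>)}"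

definition elicits :: "nat \<Rightarrow> 'r set \<Rightarrow> 'y set \<Rightarrow> ('r \<Rightarrow> 'y \<Rightarrow> real) \<Rightarrow> ('r \<Rightarrow> 'y \<Rightarrow> complex mat)
     \<Rightarrow> (complex mat \<Rightarrow> 'r set) \<Rightarrow> bool" where
  "elicits n R Y s \<mu> \<Gamma> \<longleftrightarrow> (\<forall>\<rho>. density n \<rho> \<longrightarrow> \<Gamma> \<rho> = qargmax R Y s \<mu> \<rho>)"

definition Gamma_top :: "nat \<Rightarrow> nat \<Rightarrow> complex mat \<Rightarrow> complex vec list set" where
  "Gamma_top n k \<rho> = {xs \<in> orthonormal_tuples n k.
      \<forall>i<k. \<rho> *\<^sub>v (xs ! i) = complex_of_real (eig_desc \<rho> (Suc i)) \<cdot>\<^sub>v (xs ! i)}"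

definition top_mu :: "nat \<Rightarrow> nat \<Rightarrow> complex vec list \<Rightarrow> nat \<Rightarrow> complex mat" where
  "top_mu n k xs y = (if y \<le> k then outer n (xs ! (y - 1))
       else 1\<^sub>m n - mat n n (\<lambda>(a, b). \<Sum>i<k. (xs ! i) $ a * cnj ((xs ! i) $ b)))"

definition weighted_outer :: "nat \<Rightarrow> nat \<Rightarrow> (nat \<Rightarrow> real) \<Rightarrow> complex vec list \<Rightarrow> complex mat" where
  "weighted_outer n k v xs = mat n n (\<lambda>(a, b).
       \<Sum>i<k. complex_of_real (v (Suc i)) * ((xs ! i) $ a * cnj ((xs ! i) $ b)))"

end

theory Submission
  imports Defs
begin

text \<open>Let \<open>u\<^sub>1, \<dots>, u\<^sub>n\<close> be an orthonormal eigenbasis of \<open>\<rho>\<close> with eigenvalues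
  \<open>\<lambda>\<^sub>1 \<ge> \<dots> \<ge> \<lambda>\<^sub>n\<close>. The expected score of an orthonormal tuple is
  \<open>\<Sum>\<^sub>i v\<^sub>i \<langle>x\<^sub>i, \<rho> x\<^sub>i\<rangle> = \<Sum>\<^sub>i v\<^sub>i \<Sum>\<^sub>m \<lambda>\<^sub>m p\<^sub>i\<^sub>m\<close> with \<open>p\<^sub>i\<^sub>m = |\<langle>u\<^sub>m, x\<^sub>i\<rangle>|\<^sup>2\<close>, a matrix whose rows sum
  to one (Parseval) and whose columns sum to at most one (Bessel). Summation by parts writes the
  score as \<open>\<Sum>\<^sub>j (v\<^sub>j - v\<^sub>j\<^sub>+\<^sub>1)\<close> times the total weight of the first \<open>j\<close> rows, which is at most
  \<open>\<lambda>\<^sub>1 + \<dots> + \<lambda>\<^sub>j\<close> because these rows put mass at most one on each eigenvalue. So the score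
  is at most \<open>\<Sum>\<^sub>i v\<^sub>i \<lambda>\<^sub>i\<close>, the eigenbasis attains this bound, and since the weights \<open>v\<^sub>j - v\<^sub>j\<^sub>+\<^sub>1\<close>
  are positive, equality forces every \<open>x\<^sub>i\<close> to live in the \<open>\<lambda>\<^sub>i\<close>-eigenspace.\<close>

lemma mat_adjoint_eq: "mat_adjoint (A :: complex mat) = mat (dim_col A) (dim_row A) (\<lambda>(i, j). cnj (A $$ (j, i)))"
  by (rule eq_matI) (auto simp: mat_adjoint_def mat_of_rows_def)

lemma mat_adjoint_index [simp]:
  "i < dim_col A \<Longrightarrow> j < dim_row A \<Longrightarrow> mat_adjoint (A :: complex mat) $$ (i, j) = cnj (A $$ (j, i))"
  "dim_row (mat_adjoint A) = dim_col A" "dim_col (mat_adjoint A) = dim_row A"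
  by (auto simp: mat_adjoint_eq)

lemma mat_adjoint_carrier [simp]: "A \<in> carrier_mat nr nc \<Longrightarrow> mat_adjoint (A :: complex mat) \<in> carrier_mat nc nr"
  unfolding carrier_mat_def by simp

lemma mat_adjoint_adjoint [simp]: "mat_adjoint (mat_adjoint (A :: complex mat)) = A"
  by (rule eq_matI) simp_all

lemma mat_adjoint_one [simp]: "mat_adjoint (1\<^sub>m n :: complex mat) = 1\<^sub>m n"
  by (rule eq_matI) simp_all

lemma mat_adjoint_zero [simp]: "mat_adjoint (0\<^sub>m n m :: complex mat) = 0\<^sub>m m n"
  by (rule eq_matI) simp_all

lemma mat_adjoint_mult:
  assumes "A \<in> carrier_mat nr n" "B \<in> carrier_mat n nc"
  shows "mat_adjoint (A * B) = mat_adjoint B * mat_adjoint (A :: complex mat)"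
  by (rule eq_matI) (use assms in \<open>auto simp: scalar_prod_def cnj_sum mult.commute\<close>)

lemma mat_adjoint_four_block:
  assumes "A \<in> carrier_mat n1 m1" "B \<in> carrier_mat n1 m2" "C \<in> carrier_mat n2 m1" "D \<in> carrier_mat n2 m2"
  shows "mat_adjoint (four_block_mat A B C D :: complex mat)
    = four_block_mat (mat_adjoint A) (mat_adjoint C) (mat_adjoint B) (mat_adjoint D)"
  by (rule eq_matI) (use assms in auto)

lemma index_mult_mat_sum:
  assumes "A \<in> carrier_mat nr n" "B \<in> carrier_mat n nc" "i < nr" "j < nc"
  shows "(A * B) $$ (i, j) = (\<Sum>a<n. A $$ (i, a) * B $$ (a, j))"
  using assms by (simp add: scalar_prod_def atLeast0LessThan)

lemma index_mult_mat_vec_sum: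
  assumes "A \<in> carrier_mat n n" "x \<in> carrier_vec n" "a < n"
  shows "(A *\<^sub>v x) $ a = (\<Sum>b<n. A $$ (a, b) * x $ b)"
  using assms by (simp add: scalar_prod_def atLeast0LessThan)

definition hermitian :: "complex mat \<Rightarrow> bool" where
  "hermitian A \<longleftrightarrow> mat_adjoint A = A"

definition unitary :: "nat \<Rightarrow> complex mat \<Rightarrow> bool" where
  "unitary n U \<longleftrightarrow> U \<in> carrier_mat n n \<and> mat_adjoint U * U = 1\<^sub>m n"

lemma unitary_right_inverse:
  assumes "unitary n U" shows "U * mat_adjoint U = 1\<^sub>m n"
  using assms mat_mult_left_right_inverse[of "mat_adjoint U" n U] by (auto simp: unitary_def)

lemma unitary_mult:
  assumes "unitary n U" "unitary n V" shows "unitary n (U * V)"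
proof -
  have U: "U \<in> carrier_mat n n" and V: "V \<in> carrier_mat n n" using assms by (auto simp: unitary_def)
  have "mat_adjoint (U * V) * (U * V) = mat_adjoint V * (mat_adjoint U * U) * V"
    unfolding mat_adjoint_mult[OF U V] using U V
    by (simp add: assoc_mult_mat[of _ n n _ n _ n] mult_carrier_mat[of _ n n _ n])
  also have "\<dots> = 1\<^sub>m n" using assms V by (simp add: unitary_def)
  finally show ?thesis using U V by (simp add: unitary_def)
qed

lemma hermitian_unitary_conj:
  assumes "hermitian A" "A \<in> carrier_mat n n" "U \<in> carrier_mat n m"
  shows "hermitian (mat_adjoint U * A * U)"
proof -
  have "mat_adjoint (mat_adjoint U * A * U) = mat_adjoint U * mat_adjoint (mat_adjoint U * A)"
    using assms by (intro mat_adjoint_mult) auto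
  also have "mat_adjoint (mat_adjoint U * A) = A * U"
    using assms by (simp add: mat_adjoint_mult[of _ m n _ n] hermitian_def)
  finally show ?thesis
    using assms by (simp add: hermitian_def assoc_mult_mat[of _ m n _ n _ m])
qed

section \<open>The spectral theorem\<close>

lemma cscalar_normalize:
  fixes w :: "complex vec"
  assumes w: "w \<in> carrier_vec n" and nz: "w \<bullet>c w \<noteq> 0"
  defines "c \<equiv> complex_of_real (1 / sqrt (Re (w \<bullet>c w)))"
  shows "(c \<cdot>\<^sub>v w) \<bullet>c (c \<cdot>\<^sub>v w) = 1"
proof -
  define S where "S = (\<Sum>i<n. (cmod (w $ i))\<^sup>2)"
  have ww: "w \<bullet>c w = of_real S"
    using w by (simp add: S_def scalar_prod_def atLeast0LessThan complex_norm_square del: of_real_power)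
  have "0 \<le> S" unfolding S_def by (intro sum_nonneg) auto
  then have pos: "0 < Re (w \<bullet>c w)" using nz ww by (auto simp: order_less_le)
  have "(c \<cdot>\<^sub>v w) \<bullet>c (c \<cdot>\<^sub>v w) = c * cnj c * (w \<bullet>c w)"
    using w by (simp add: scalar_prod_def sum_distrib_left ac_simps)
  also have "\<dots> = 1" using pos ww unfolding c_def by (simp add: field_simps flip: of_real_mult)
  finally show ?thesis .
qed

lemma unit_eigenvector_exists:
  fixes A :: "complex mat"
  assumes A: "A \<in> carrier_mat n n" and n: "0 < n"
  obtains v e where "v \<in> carrier_vec n" "v \<bullet>c v = 1" "A *\<^sub>v v = e \<cdot>\<^sub>v v"
proof -
  have "degree (char_poly A) = n" using degree_monic_char_poly[OF A] by simp
  then have "\<not> constant (poly (char_poly A))" using n by (simp add: constant_degree)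
  then obtain e where "poly (char_poly A) e = 0" using fundamental_theorem_of_algebra by blast
  then obtain w where w: "w \<in> carrier_vec n" "w \<noteq> 0\<^sub>v n" "A *\<^sub>v w = e \<cdot>\<^sub>v w"
    using eigenvalue_root_char_poly[OF A] A unfolding eigenvalue_def eigenvector_def by auto
  have "w \<bullet>c w \<noteq> 0" using w by (metis carrier_vecD conjugate_square_eq_0_vec)
  moreover define c where "c = complex_of_real (1 / sqrt (Re (w \<bullet>c w)))"
  ultimately have unit: "(c \<cdot>\<^sub>v w) \<bullet>c (c \<cdot>\<^sub>v w) = 1" using cscalar_normalize[OF w(1)] by simp
  have "A *\<^sub>v (c \<cdot>\<^sub>v w) = e \<cdot>\<^sub>v (c \<cdot>\<^sub>v w)"
    using mult_mat_vec[OF A w(1)] w(3) by (simp add: smult_smult_assoc mult.commute)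
  then show thesis using unit w(1) by (intro that[of "c \<cdot>\<^sub>v w" e]) auto
qed

lemma unitary_of_corthogonal:
  assumes ws: "corthogonal ws" "length ws = n" "set ws \<subseteq> carrier_vec n"
  shows "unitary n (mat n n (\<lambda>(a, i). complex_of_real (1 / sqrt (Re (ws ! i \<bullet>c ws ! i))) * ws ! i $ a))"
    (is "unitary n ?W")
proof -
  define c where "c i = complex_of_real (1 / sqrt (Re (ws ! i \<bullet>c ws ! i)))" for i
  have wsc: "\<And>i. i < n \<Longrightarrow> ws ! i \<in> carrier_vec n" using ws by auto
  have "(mat_adjoint ?W * ?W) $$ (i, j) = 1\<^sub>m n $$ (i, j)" if i: "i < n" and j: "j < n" for i j
  proof -
    have W_ij: "(mat_adjoint ?W * ?W) $$ (i, j) = (c j \<cdot>\<^sub>v ws ! j) \<bullet>c (c i \<cdot>\<^sub>v ws ! i)"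
      using wsc[OF i] wsc[OF j] i j unfolding c_def
      by (simp add: index_mult_mat_sum[of _ n n] scalar_prod_def atLeast0LessThan ac_simps)
    have orth: "ws ! j \<bullet>c ws ! i = 0 \<longleftrightarrow> j \<noteq> i" using ws i j by (simp add: corthogonal_def)
    show ?thesis
    proof (cases "i = j")
      case True
      then show ?thesis using W_ij cscalar_normalize[OF wsc[OF i]] orth i unfolding c_def by simp
    next
      case False
      have "(c j \<cdot>\<^sub>v ws ! j) \<bullet>c (c i \<cdot>\<^sub>v ws ! i) = c j * cnj (c i) * (ws ! j \<bullet>c ws ! i)"
        using wsc[OF i] wsc[OF j] by (simp add: scalar_prod_def sum_distrib_left ac_simps)
      then show ?thesis using W_ij orth False i j by simp
    qed
  qed
  then show ?thesis by (auto simp: unitary_def intro!: eq_matI)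
qed

text \<open>Gram--Schmidt applied to a basis completion of \<open>v\<close> keeps \<open>v\<close> as its first vector.\<close>
lemma unitary_with_first_column:
  fixes v :: "complex vec"
  assumes v: "v \<in> carrier_vec n" and v1: "v \<bullet>c v = 1"
  obtains W where "unitary n W" "col W 0 = v"
proof -
  interpret cof_vec_space n "TYPE(complex)" .
  have v0: "v \<noteq> 0\<^sub>v n" using v1 v by auto
  then have n: "0 < n" using v by (cases n) auto
  obtain vs where bs: "basis_completion v = v # vs" unfolding basis_completion_def Let_def by simp
  note bc = basis_completion[OF v v0, unfolded bs]
  define ws where "ws = gram_schmidt n (v # vs)"
  note gs = gram_schmidt_result[OF bc(2) bc(4) bc(5) ws_def]
  have "length ws = n" using gs bc by simp
  moreover have "hd ws = v" unfolding ws_def using gram_schmidt_hd[OF v] by simp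
  ultimately have ws0: "ws ! 0 = v" using n by (cases ws) auto
  define W where "W = mat n n (\<lambda>(a, i). complex_of_real (1 / sqrt (Re (ws ! i \<bullet>c ws ! i))) * ws ! i $ a)"
  have "unitary n W" unfolding W_def using gs \<open>length ws = n\<close> by (intro unitary_of_corthogonal) auto
  moreover have "col W 0 = v" using ws0 v1 v n unfolding W_def by (intro eq_vecI) auto
  ultimately show thesis by (rule that)
qed

lemma unitary_conj_first_column:
  assumes A: "A \<in> carrier_mat n n" and W: "unitary n W" and i: "i < n"
    and ev: "A *\<^sub>v col W 0 = e \<cdot>\<^sub>v col W 0"
  shows "(mat_adjoint W * A * W) $$ (i, 0) = (if i = 0 then e else 0)"
proof -
  have Wc: "W \<in> carrier_mat n n" and WW: "mat_adjoint W * W = 1\<^sub>m n" using W by (auto simp: unitary_def)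
  have "col (mat_adjoint W * A * W) 0 = mat_adjoint W *\<^sub>v (A *\<^sub>v col W 0)"
    using A Wc i by (simp add: col_mult2[of _ n n _ n] mult_carrier_mat[of _ n n _ n]
        assoc_mult_mat_vec[of _ n n _ n] carrier_vecI)
  also have "\<dots> = e \<cdot>\<^sub>v col (mat_adjoint W * W) 0"
    using Wc i by (simp add: ev mult_mat_vec[of _ n n] col_mult2[of _ n n _ n] carrier_vecI)
  finally have "col (mat_adjoint W * A * W) 0 = e \<cdot>\<^sub>v unit_vec n 0"
    using WW i by simp
  moreover have "(mat_adjoint W * A * W) $$ (i, 0) = col (mat_adjoint W * A * W) 0 $ i"
    using A Wc i by simp
  ultimately show ?thesis using i by simp
qed

lemma hermitian_block_split:
  assumes A: "A \<in> carrier_mat (Suc m) (Suc m)" and h: "hermitian A"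
    and col0: "\<And>i. 0 < i \<Longrightarrow> i < Suc m \<Longrightarrow> A $$ (i, 0) = 0"
  defines "B \<equiv> mat m m (\<lambda>(i, j). A $$ (Suc i, Suc j))"
  shows "A = four_block_mat (mat 1 1 (\<lambda>_. A $$ (0, 0))) (0\<^sub>m 1 m) (0\<^sub>m m 1) B" and "hermitian B"
proof -
  have sym: "\<And>i j. i < Suc m \<Longrightarrow> j < Suc m \<Longrightarrow> A $$ (i, j) = cnj (A $$ (j, i))"
    using A h unfolding hermitian_def by (metis carrier_matD mat_adjoint_index(1))
  show "A = four_block_mat (mat 1 1 (\<lambda>_. A $$ (0, 0))) (0\<^sub>m 1 m) (0\<^sub>m m 1) B"
  proof (rule eq_matI)
    fix i j assume "i < dim_row (four_block_mat (mat 1 1 (\<lambda>_. A $$ (0, 0))) (0\<^sub>m 1 m) (0\<^sub>m m 1) B)"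
      "j < dim_col (four_block_mat (mat 1 1 (\<lambda>_. A $$ (0, 0))) (0\<^sub>m 1 m) (0\<^sub>m m 1) B)"
    then have i: "i < Suc m" and j: "j < Suc m" by (simp_all add: B_def)
    show "A $$ (i, j) = four_block_mat (mat 1 1 (\<lambda>_. A $$ (0, 0))) (0\<^sub>m 1 m) (0\<^sub>m m 1) B $$ (i, j)"
      using i j col0 sym[of 0 j] by (cases i; cases j) (auto simp: B_def)
  qed (use A in \<open>auto simp: B_def\<close>)
  have "mat_adjoint B $$ (i, j) = B $$ (i, j)" if "i < m" "j < m" for i j
    using that sym[of "Suc i" "Suc j"] by (simp add: B_def)
  then show "hermitian B" unfolding hermitian_def by (intro eq_matI) (auto simp: B_def)
qed

lemma mat_adjoint_one_block:
  fixes U :: "complex mat"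
  assumes "U \<in> carrier_mat m m"
  shows "mat_adjoint (four_block_mat (1\<^sub>m 1) (0\<^sub>m 1 m) (0\<^sub>m m 1) U)
    = four_block_mat (1\<^sub>m 1) (0\<^sub>m 1 m) (0\<^sub>m m 1) (mat_adjoint U)"
  using assms mat_adjoint_four_block[of "1\<^sub>m 1" 1 1 "0\<^sub>m 1 m" m "0\<^sub>m m 1" m U] by simp

lemma unitary_one_block:
  assumes "unitary m U"
  shows "unitary (Suc m) (four_block_mat (1\<^sub>m 1) (0\<^sub>m 1 m) (0\<^sub>m m 1) U)"
proof -
  have U: "U \<in> carrier_mat m m" using assms by (simp add: unitary_def)
  then have "four_block_mat (1\<^sub>m 1) (0\<^sub>m 1 m) (0\<^sub>m m 1) U \<in> carrier_mat (Suc m) (Suc m)"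
    by (metis four_block_carrier_mat one_carrier_mat plus_1_eq_Suc)
  moreover have "mat_adjoint U * U = 1\<^sub>m m" using assms by (simp add: unitary_def)
  ultimately show ?thesis
    unfolding unitary_def mat_adjoint_one_block[OF U] using U
    by (subst mult_four_block_mat[of _ 1 1 _ m _ m _ _ 1 _ m]) simp_all
qed

lemma diagonal_one_block:
  assumes "diagonal_mat D" "D \<in> carrier_mat m m"
  shows "diagonal_mat (four_block_mat (mat 1 1 f) (0\<^sub>m 1 m) (0\<^sub>m m 1) D)"
  using assms unfolding diagonal_mat_def by (fastforce simp: less_Suc_eq_0_disj)

text \<open>The first column of \<open>W\<close> is a unit eigenvector of \<open>A\<close>.\<close>
lemma hermitian_deflation:
  assumes A: "A \<in> carrier_mat (Suc m) (Suc m)" and h: "hermitian A"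
  obtains W e B where "unitary (Suc m) W" "B \<in> carrier_mat m m" "hermitian B"
    "mat_adjoint W * A * W = four_block_mat (mat 1 1 (\<lambda>_. e)) (0\<^sub>m 1 m) (0\<^sub>m m 1) B"
proof -
  obtain v e where v: "v \<in> carrier_vec (Suc m)" "v \<bullet>c v = 1" "A *\<^sub>v v = e \<cdot>\<^sub>v v"
    using unit_eigenvector_exists[OF A] by blast
  obtain W where W: "unitary (Suc m) W" "col W 0 = v"
    using unitary_with_first_column[OF v(1,2)] by blast
  have Wc: "W \<in> carrier_mat (Suc m) (Suc m)" using W by (simp add: unitary_def)
  define A' where "A' = mat_adjoint W * A * W"
  have A': "A' \<in> carrier_mat (Suc m) (Suc m)" unfolding A'_def using A Wc by auto
  have col0: "\<And>i. i < Suc m \<Longrightarrow> A' $$ (i, 0) = (if i = 0 then e else 0)"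
    unfolding A'_def using unitary_conj_first_column[OF A W(1)] v(3) W(2) by simp
  then have "\<And>i. 0 < i \<Longrightarrow> i < Suc m \<Longrightarrow> A' $$ (i, 0) = 0" by simp
  note split = hermitian_block_split[OF A' _ this]
  show thesis
  proof (rule that[OF W(1)])
    show "mat_adjoint W * A * W
      = four_block_mat (mat 1 1 (\<lambda>_. e)) (0\<^sub>m 1 m) (0\<^sub>m m 1) (mat m m (\<lambda>(i, j). A' $$ (Suc i, Suc j)))"
      using split(1) col0[of 0] hermitian_unitary_conj[OF h A Wc] unfolding A'_def by simp
  qed (use split(2) hermitian_unitary_conj[OF h A Wc] in \<open>auto simp: A'_def\<close>)
qed

theorem hermitian_unitary_diagonalization:
  assumes "A \<in> carrier_mat n n" "hermitian A"
  obtains U where "unitary n U" "diagonal_mat (mat_adjoint U * A * U)"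
  using assms
proof (induction n arbitrary: A thesis)
  case 0
  then show ?case by (intro "0.prems"(1)[of "1\<^sub>m 0"]) (auto simp: unitary_def diagonal_mat_def)
next
  case (Suc m A)
  obtain W e B where W: "unitary (Suc m) W" and B: "B \<in> carrier_mat m m" "hermitian B"
    and WAW: "mat_adjoint W * A * W = four_block_mat (mat 1 1 (\<lambda>_. e)) (0\<^sub>m 1 m) (0\<^sub>m m 1) B"
    using hermitian_deflation[OF Suc.prems(2,3)] by blast
  obtain U' where U': "unitary m U'" "diagonal_mat (mat_adjoint U' * B * U')"
    using Suc.IH[OF _ B] by blast
  have U'c: "U' \<in> carrier_mat m m" using U' by (simp add: unitary_def)
  define V where "V = four_block_mat (1\<^sub>m 1) (0\<^sub>m 1 m) (0\<^sub>m m 1) U'"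
  have V: "unitary (Suc m) V" unfolding V_def by (rule unitary_one_block[OF U'(1)])
  have Wc: "W \<in> carrier_mat (Suc m) (Suc m)" and Vc: "V \<in> carrier_mat (Suc m) (Suc m)"
    using W V by (simp_all add: unitary_def)
  have "mat_adjoint (W * V) * A * (W * V) = mat_adjoint V * (mat_adjoint W * A * W) * V"
    unfolding mat_adjoint_mult[OF Wc Vc] using Suc.prems(2) Wc Vc
    by (simp add: assoc_mult_mat[of _ "Suc m" "Suc m" _ "Suc m" _ "Suc m"]
        mult_carrier_mat[of _ "Suc m" "Suc m" _ "Suc m"])
  also have "\<dots> = four_block_mat (mat 1 1 (\<lambda>_. e)) (0\<^sub>m 1 m) (0\<^sub>m m 1) (mat_adjoint U' * B * U')"
    unfolding WAW V_def mat_adjoint_one_block[OF U'c]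
    using U'c B mult_carrier_mat[OF mat_adjoint_carrier[OF U'c] B(1)]
    by (subst mult_four_block_mat[of _ 1 1 _ m _ m _ _ 1 _ m], simp_all,
        subst mult_four_block_mat[of _ 1 1 _ m _ m _ _ 1 _ m], simp_all add: left_add_zero_mat[of _ m m])
  finally have "diagonal_mat (mat_adjoint (W * V) * A * (W * V))"
    using diagonal_one_block[OF U'(2)] U'c B(1) by (metis mat_adjoint_carrier mult_carrier_mat)
  then show ?case using Suc.prems(1) unitary_mult[OF W V] by blast
qed

lemma proots_prod_linear_factors: "proots (\<Prod>a\<leftarrow>xs. [:- a, 1:]) = mset (xs :: complex list)"
proof (induction xs)
  case (Cons a xs)
  have "(\<Prod>a\<leftarrow>xs. [:- a, 1:]) \<noteq> (0 :: complex poly)" by (auto simp: prod_list_zero_iff)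
  then have "proots (\<Prod>a\<leftarrow>a # xs. [:- a, 1:]) = proots [:- a, 1:] + proots (\<Prod>a\<leftarrow>xs. [:- a, 1:])"
    unfolding list.map prod_list.Cons by (intro proots_mult) auto
  then show ?case using Cons proots_linear_factor[of "- a"] by simp
qed simp

lemma mult_mat_vec_unit_vec: "(U :: complex mat) \<in> carrier_mat n n \<Longrightarrow> m < n \<Longrightarrow> U *\<^sub>v unit_vec n m = col U m"
  using col_mult2[of U n n "1\<^sub>m n" n m] right_mult_one_mat[of U n n] by simp

lemma proots_char_poly_unitary_diagonalization:
  assumes A: "A \<in> carrier_mat n n" and U: "unitary n U" and diag: "diagonal_mat (mat_adjoint U * A * U)"
  shows "proots (char_poly A) = mset (diag_mat (mat_adjoint U * A * U))"
proof -
  define D where "D = mat_adjoint U * A * U"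
  have Uc: "U \<in> carrier_mat n n" and aU: "mat_adjoint U \<in> carrier_mat n n" and UU: "mat_adjoint U * U = 1\<^sub>m n"
    using U by (auto simp: unitary_def)
  have Dc: "D \<in> carrier_mat n n" unfolding D_def using A Uc by auto
  have "U * D * mat_adjoint U = U * mat_adjoint U * A * (U * mat_adjoint U)"
    unfolding D_def using A Uc by (simp add: assoc_mult_mat[of _ n n _ n _ n] mult_carrier_mat[of _ n n _ n])
  then have "A = U * D * mat_adjoint U" using A by (simp add: unitary_right_inverse[OF U])
  then have sim: "similar_mat A D"
    using similar_mat_witI[OF unitary_right_inverse[OF U] UU _ A Dc Uc aU] unfolding similar_mat_def by blast
  have "upper_triangular D"
    using diag Dc unfolding D_def[symmetric] diagonal_mat_def upper_triangular_def by auto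
  then have "char_poly A = (\<Prod>a\<leftarrow>diag_mat D. [:- a, 1:])"
    using char_poly_similar[OF sim] char_poly_upper_triangular[OF Dc] by simp
  then show ?thesis unfolding D_def by (simp only: proots_prod_linear_factors)
qed

locale unitary_eigenbasis =
  fixes n :: nat and A :: "complex mat" and U :: "complex mat" and \<mu> :: "nat \<Rightarrow> real"
  assumes carrier: "A \<in> carrier_mat n n" and unitary: "unitary n U"
    and eigen: "\<And>m. m < n \<Longrightarrow> A *\<^sub>v col U m = complex_of_real (\<mu> m) \<cdot>\<^sub>v col U m"

lemma hermitian_eigenbasis:
  assumes A: "A \<in> carrier_mat n n" and h: "hermitian A"
  obtains U \<mu> where "unitary_eigenbasis n A U \<mu>" "image_mset Re (proots (char_poly A)) = mset (map \<mu> [0..<n])"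
proof -
  obtain U where U: "unitary n U" and diag: "diagonal_mat (mat_adjoint U * A * U)"
    using hermitian_unitary_diagonalization[OF A h] by blast
  have Uc: "U \<in> carrier_mat n n" using U by (simp add: unitary_def)
  define D where "D = mat_adjoint U * A * U"
  have Dc: "D \<in> carrier_mat n n" unfolding D_def using A Uc by auto
  have AUc: "A * U \<in> carrier_mat n n" using A Uc by auto
  have "U * D = U * mat_adjoint U * (A * U)"
    unfolding D_def assoc_mult_mat[OF mat_adjoint_carrier[OF Uc] A Uc]
      assoc_mult_mat[OF Uc mat_adjoint_carrier[OF Uc] AUc] ..
  then have AU: "A * U = U * D" unfolding unitary_right_inverse[OF U] left_mult_one_mat[OF AUc] ..
  define \<mu> where "\<mu> i = Re (D $$ (i, i))" for i
  have Dreal: "D $$ (m, m) = complex_of_real (\<mu> m)" if "m < n" for m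
  proof -
    have "cnj (D $$ (m, m)) = D $$ (m, m)"
      using hermitian_unitary_conj[OF h A Uc] mat_adjoint_index(1)[of m D m] Dc that
      unfolding hermitian_def D_def[symmetric] by simp
    then show ?thesis unfolding \<mu>_def using Reals_cnj_iff of_real_Re by metis
  qed
  have "A *\<^sub>v col U m = complex_of_real (\<mu> m) \<cdot>\<^sub>v col U m" if m: "m < n" for m
  proof -
    have "col D m = D $$ (m, m) \<cdot>\<^sub>v unit_vec n m"
      using diag Dc m unfolding D_def[symmetric] diagonal_mat_def by (intro eq_vecI) auto
    then have "col (U * D) m = D $$ (m, m) \<cdot>\<^sub>v col U m"
      using col_mult2[OF Uc Dc m] mult_mat_vec[OF Uc unit_vec_carrier] mult_mat_vec_unit_vec[OF Uc m]
      by simp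
    then show ?thesis using col_mult2[OF A Uc m] Dreal[OF m] by (simp add: AU)
  qed
  then have "unitary_eigenbasis n A U \<mu>" using A U by unfold_locales
  moreover have "image_mset Re (proots (char_poly A)) = mset (map \<mu> [0..<n])"
    using proots_char_poly_unitary_diagonalization[OF A U diag] Dc Dreal
    unfolding D_def[symmetric] by (auto simp: diag_mat_def multiset.map_comp intro!: image_mset_cong)
  ultimately show thesis by (rule that)
qed

lemma unitary_eigenbasis_permute:
  assumes "unitary_eigenbasis n A U \<mu>" and p: "p permutes {..<n}"
  shows "unitary_eigenbasis n A (mat n n (\<lambda>(a, m). U $$ (a, p m))) (\<mu> \<circ> p)"
proof -
  interpret unitary_eigenbasis n A U \<mu> by fact
  define U' where "U' = mat n n (\<lambda>(a, m). U $$ (a, p m))"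
  have Uc: "U \<in> carrier_mat n n" and UU: "mat_adjoint U * U = 1\<^sub>m n"
    using unitary by (auto simp: unitary_def)
  have pn: "p m < n" if "m < n" for m using permutes_in_image[OF p, of m] that by simp
  have col: "col U' m = col U (p m)" if "m < n" for m
    using that Uc pn[OF that] unfolding U'_def by (intro eq_vecI) auto
  have "mat_adjoint U' * U' = 1\<^sub>m n"
  proof (rule eq_matI)
    fix i j assume "i < dim_row (1\<^sub>m n)" "j < dim_col (1\<^sub>m n)"
    then have i: "i < n" and j: "j < n" by auto
    have U'c: "U' \<in> carrier_mat n n" unfolding U'_def by simp
    have "(mat_adjoint U' * U') $$ (i, j) = (\<Sum>a<n. cnj (U $$ (a, p i)) * U $$ (a, p j))"
      using index_mult_mat_sum[OF mat_adjoint_carrier[OF U'c] U'c i j] i j unfolding U'_def by simp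
    also have "\<dots> = (mat_adjoint U * U) $$ (p i, p j)"
      using index_mult_mat_sum[OF mat_adjoint_carrier[OF Uc] Uc pn[OF i] pn[OF j]] Uc pn[OF i] pn[OF j]
      by simp
    also have "\<dots> = 1\<^sub>m n $$ (i, j)"
      using UU i j pn[OF i] pn[OF j] permutes_inj[OF p] by (auto dest: injD)
    finally show "(mat_adjoint U' * U') $$ (i, j) = 1\<^sub>m n $$ (i, j)" .
  qed (auto simp: U'_def)
  then show ?thesis
    using carrier eigen col pn unfolding U'_def[symmetric]
    by unfold_locales (auto simp: unitary_def U'_def)
qed

lemma hermitian_sorted_eigenbasis:
  assumes A: "A \<in> carrier_mat n n" and h: "hermitian A"
  obtains U where "unitary_eigenbasis n A U (\<lambda>m. eig_desc A (Suc m))"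
    and "\<And>i j. i \<le> j \<Longrightarrow> j < n \<Longrightarrow> eig_desc A (Suc j) \<le> eig_desc A (Suc i)"
proof -
  obtain U \<mu> where U: "unitary_eigenbasis n A U \<mu>"
    and roots: "image_mset Re (proots (char_poly A)) = mset (map \<mu> [0..<n])"
    using hermitian_eigenbasis[OF A h] by blast
  define L where "L = rev (sort (map \<mu> [0..<n]))"
  have eig: "eig_desc A (Suc i) = L ! i" for i
    unfolding eig_desc_def roots L_def sorted_list_of_multiset_mset by simp
  obtain p where p: "p permutes {..<n}" and pL: "permute_list p (map \<mu> [0..<n]) = L"
    using mset_eq_permutation[of L "map \<mu> [0..<n]"] unfolding L_def by auto
  have "L ! m = (\<mu> \<circ> p) m" if "m < n" for m
    using that p pL permute_list_nth[of p "map \<mu> [0..<n]"] permutes_in_image[OF p]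
    by (metis comp_apply diff_zero length_map length_upt lessThan_iff nth_map_upt plus_nat.add_0)
  then have "unitary_eigenbasis n A (mat n n (\<lambda>(a, m). U $$ (a, p m))) (\<lambda>m. eig_desc A (Suc m))"
    using unitary_eigenbasis_permute[OF U p] unfolding eig unitary_eigenbasis_def by auto
  moreover have "eig_desc A (Suc j) \<le> eig_desc A (Suc i)" if "i \<le> j" "j < n" for i j
    using that sorted_nth_mono[of "sort (map \<mu> [0..<n])" "n - Suc j" "n - Suc i"]
    unfolding eig L_def by (simp add: rev_nth)
  ultimately show thesis by (rule that)
qed

section \<open>Ky Fan's maximum principle\<close>

lemma capped_weights_sum:
  fixes lam c :: "nat \<Rightarrow> real"
  assumes J: "J \<le> n" and lam: "\<And>i j. i \<le> j \<Longrightarrow> j < n \<Longrightarrow> lam j \<le> lam i"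
    and c0: "\<And>m. m < n \<Longrightarrow> 0 \<le> c m" and c1: "\<And>m. m < n \<Longrightarrow> c m \<le> 1"
    and cs: "(\<Sum>m<n. c m) = real J"
  shows "(\<Sum>m<n. lam m * c m) \<le> (\<Sum>m<J. lam m)"
    and "(\<Sum>m<n. lam m * c m) = (\<Sum>m<J. lam m) \<Longrightarrow> m < n \<Longrightarrow> J \<le> m \<Longrightarrow> 0 < c m
      \<Longrightarrow> lam m = lam (J - 1)"
proof -
  define g where "g m = (lam m - lam (J - 1)) * (c m - (if m < J then 1 else 0))" for m
  have "(\<Sum>m<n. if m < J then f m else 0) = (\<Sum>m<J. f m)" for f :: "nat \<Rightarrow> real"
    by (rule sum.mono_neutral_cong_right) (use J in auto)
  then have "(\<Sum>m<n. g m) = (\<Sum>m<n. lam m * c m) - (\<Sum>m<J. lam m) - lam (J - 1) * (\<Sum>m<n. c m) + lam (J - 1) * J"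
    by (simp add: g_def algebra_simps sum.distrib sum_subtractf sum_distrib_left sum_distrib_right
        if_distrib[of "times _"] cong: if_cong)
  then have gap: "(\<Sum>m<n. lam m * c m) - (\<Sum>m<J. lam m) = (\<Sum>m<n. g m)" using cs by simp
  have g_nonpos: "g m \<le> 0" if m: "m < n" for m
  proof (cases "m < J")
    case True
    then have "lam (J - 1) \<le> lam m" using lam[of m "J - 1"] J by auto
    then show ?thesis unfolding g_def using True c1[OF m] by (simp add: mult_nonneg_nonpos)
  next
    case False
    then have "lam m \<le> lam (J - 1)" using lam[of "J - 1" m] m by auto
    then show ?thesis unfolding g_def using False c0[OF m] by (simp add: mult_nonpos_nonneg)
  qed
  then show "(\<Sum>m<n. lam m * c m) \<le> (\<Sum>m<J. lam m)" using gap sum_nonpos[of "{..<n}" g] by simp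
  assume "(\<Sum>m<n. lam m * c m) = (\<Sum>m<J. lam m)" and m: "m < n" "J \<le> m" "0 < c m"
  then have "(\<Sum>m<n. g m) = 0" using gap by simp
  then have "(\<Sum>m<n. - g m) = 0" by (simp add: sum_negf)
  then have "g m = 0" using sum_nonneg_eq_0_iff[of "{..<n}" "\<lambda>m. - g m"] g_nonpos m by simp
  then show "lam m = lam (J - 1)" using m unfolding g_def by simp
qed

lemma summation_by_parts:
  "(\<Sum>i<k. w i * a i) = (\<Sum>j<k. (w j - w (Suc j)) * (\<Sum>i\<le>j. a i)) + w k * (\<Sum>i<k. a i :: real)"
  by (induction k) (simp_all add: algebra_simps flip: lessThan_Suc_atMost)

context
  fixes n k :: nat and lam :: "nat \<Rightarrow> real" and p :: "nat \<Rightarrow> nat \<Rightarrow> real"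
  assumes kn: "k \<le> n"
    and antitone: "\<And>i j. i \<le> j \<Longrightarrow> j < n \<Longrightarrow> lam j \<le> lam i"
    and p0: "\<And>i m. i < k \<Longrightarrow> m < n \<Longrightarrow> 0 \<le> p i m"
    and prow: "\<And>i. i < k \<Longrightarrow> (\<Sum>m<n. p i m) = 1"
    and pcol: "\<And>m. m < n \<Longrightarrow> (\<Sum>i<k. p i m) \<le> 1"
begin

lemma partial_rows_sum:
  assumes j: "j < k"
  shows "(\<Sum>i\<le>j. \<Sum>m<n. lam m * p i m) \<le> (\<Sum>i\<le>j. lam i)"
    and "(\<Sum>i\<le>j. \<Sum>m<n. lam m * p i m) = (\<Sum>i\<le>j. lam i) \<Longrightarrow> m < n \<Longrightarrow> j < m \<Longrightarrow> 0 < p j m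
      \<Longrightarrow> lam m = lam j"
proof -
  define c where "c m = (\<Sum>i\<le>j. p i m)" for m
  have c0: "\<And>m. m < n \<Longrightarrow> 0 \<le> c m" unfolding c_def using p0 j by (intro sum_nonneg) auto
  have c1: "\<And>m. m < n \<Longrightarrow> c m \<le> 1"
  proof -
    fix m assume m: "m < n"
    have "c m \<le> (\<Sum>i<k. p i m)" unfolding c_def by (rule sum_mono2) (use j p0 m in auto)
    then show "c m \<le> 1" using pcol[OF m] by simp
  qed
  have "(\<Sum>m<n. c m) = (\<Sum>i\<le>j. \<Sum>m<n. p i m)" unfolding c_def by (rule sum.swap)
  also have "\<dots> = real (Suc j)" using prow j by simp
  finally have cs: "(\<Sum>m<n. c m) = real (Suc j)" .
  have lhs: "(\<Sum>i\<le>j. \<Sum>m<n. lam m * p i m) = (\<Sum>m<n. lam m * c m)"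
    unfolding c_def sum_distrib_left by (rule sum.swap)
  have "Suc j \<le> n" using j kn by simp
  note capped = capped_weights_sum[where lam = lam and c = c, OF this antitone c0 c1 cs]
  show "(\<Sum>i\<le>j. \<Sum>m<n. lam m * p i m) \<le> (\<Sum>i\<le>j. lam i)"
    using capped(1) unfolding lhs by (simp add: lessThan_Suc_atMost)
  assume "(\<Sum>i\<le>j. \<Sum>m<n. lam m * p i m) = (\<Sum>i\<le>j. lam i)" and m: "m < n" "j < m" "0 < p j m"
  moreover have "p j m \<le> c m" unfolding c_def by (rule member_le_sum) (use p0 j m in auto)
  ultimately show "lam m = lam j"
    using capped(2)[of m] unfolding lhs by (simp add: lessThan_Suc_atMost)
qed

lemma weighted_rows_gap:
  assumes "w k = 0"
  shows "(\<Sum>i<k. w i * lam i) - (\<Sum>i<k. w i * (\<Sum>m<n. lam m * p i m))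
    = (\<Sum>j<k. (w j - w (Suc j)) * ((\<Sum>i\<le>j. lam i) - (\<Sum>i\<le>j. \<Sum>m<n. lam m * p i m)))"
  unfolding summation_by_parts[of w lam] summation_by_parts[of w "\<lambda>i. \<Sum>m<n. lam m * p i m"] assms
  by (simp add: sum_subtractf right_diff_distrib)

lemma weighted_rows_le:
  assumes w: "\<And>i. i < k \<Longrightarrow> w (Suc i) \<le> w i" and wk: "w k = 0"
  shows "(\<Sum>i<k. w i * (\<Sum>m<n. lam m * p i m)) \<le> (\<Sum>i<k. w i * lam i)"
proof -
  have "0 \<le> (\<Sum>j<k. (w j - w (Suc j)) * ((\<Sum>i\<le>j. lam i) - (\<Sum>i\<le>j. \<Sum>m<n. lam m * p i m)))"
    using w partial_rows_sum(1) by (intro sum_nonneg mult_nonneg_nonneg) auto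
  then show ?thesis using weighted_rows_gap[of w, OF wk] by simp
qed

lemma weighted_rows_eq_imp:
  assumes w: "\<And>i. i < k \<Longrightarrow> w (Suc i) < w i" and wk: "w k = 0"
    and eq: "(\<Sum>i<k. w i * (\<Sum>m<n. lam m * p i m)) = (\<Sum>i<k. w i * lam i)"
    and i: "i < k" and m: "m < n" and pos: "0 < p i m"
  shows "lam m = lam i"
proof -
  define a where "a i = (\<Sum>m<n. lam m * p i m)" for i
  define t where "t j = (w j - w (Suc j)) * ((\<Sum>i\<le>j. lam i) - (\<Sum>i\<le>j. a i))" for j
  have t_nonneg: "\<And>j. j < k \<Longrightarrow> 0 \<le> t j"
    unfolding t_def a_def using w partial_rows_sum(1) by (intro mult_nonneg_nonneg) (auto simp: less_imp_le)
  have "(\<Sum>j<k. t j) = 0" using weighted_rows_gap[of w, OF wk] eq unfolding t_def a_def by simp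
  then have "t j = 0" if "j < k" for j using sum_nonneg_eq_0_iff[of "{..<k}" t] t_nonneg that by simp
  then have partial_eq: "(\<Sum>i\<le>j. a i) = (\<Sum>i\<le>j. lam i)" if "j < k" for j
    using w[OF that] that unfolding t_def by fastforce
  have a_eq: "a i = lam i"
  proof (cases i)
    case 0
    then show ?thesis using partial_eq[OF i] by simp
  next
    case (Suc i')
    then show ?thesis using partial_eq[OF i] partial_eq[of i'] i by simp
  qed
  define h where "h m' = (lam m' - lam i) * p i m'" for m'
  have h_nonneg: "0 \<le> h m'" if m': "m' < n" for m'
  proof (cases "m' \<le> i")
    case True
    then show ?thesis unfolding h_def using antitone[of m' i] i kn p0[OF i m'] by auto
  next
    case False
    then have "0 < p i m' \<Longrightarrow> lam m' = lam i"
      using partial_rows_sum(2)[OF i _ m'] partial_eq[OF i] unfolding a_def by simp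
    then show ?thesis unfolding h_def using p0[OF i m'] by (cases "0 < p i m'") auto
  qed
  have "(\<Sum>m'<n. h m') = a i - lam i * (\<Sum>m'<n. p i m')"
    unfolding h_def a_def by (simp add: algebra_simps sum_subtractf sum_distrib_left)
  then have "(\<Sum>m'<n. h m') = 0" using a_eq prow[OF i] by simp
  then have "h m = 0" using sum_nonneg_eq_0_iff[of "{..<n}" h] h_nonneg m by simp
  then show "lam m = lam i" using pos unfolding h_def by simp
qed

end

section \<open>Coordinates in an orthonormal eigenbasis\<close>

lemma sum_orthonormal_combination_sq:
  fixes c :: "nat \<Rightarrow> complex" and x :: "nat \<Rightarrow> nat \<Rightarrow> complex"
  assumes orth: "\<And>i j. i < k \<Longrightarrow> j < k \<Longrightarrow> (\<Sum>a<n. x i a * cnj (x j a)) = (if i = j then 1 else 0)"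
  shows "(\<Sum>a<n. (\<Sum>i<k. c i * x i a) * cnj (\<Sum>i<k. c i * x i a)) = (\<Sum>i<k. c i * cnj (c i))"
proof -
  have "(\<Sum>a<n. (\<Sum>i<k. c i * x i a) * cnj (\<Sum>i<k. c i * x i a))
      = (\<Sum>a<n. \<Sum>i<k. \<Sum>j<k. c i * cnj (c j) * (x i a * cnj (x j a)))"
    by (simp add: sum_distrib_right sum_distrib_left ac_simps) (rule sum.cong[OF refl], rule sum.swap)
  also have "\<dots> = (\<Sum>i<k. \<Sum>a<n. \<Sum>j<k. c i * cnj (c j) * (x i a * cnj (x j a)))"
    by (rule sum.swap)
  also have "\<dots> = (\<Sum>i<k. \<Sum>j<k. \<Sum>a<n. c i * cnj (c j) * (x i a * cnj (x j a)))"
    by (rule sum.cong[OF refl], rule sum.swap)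
  also have "\<dots> = (\<Sum>i<k. \<Sum>j<k. c i * cnj (c j) * (\<Sum>a<n. x i a * cnj (x j a)))"
    by (simp add: sum_distrib_left)
  also have "\<dots> = (\<Sum>i<k. c i * cnj (c i))"
    by (simp add: orth if_distrib[of "times _"] cong: if_cong)
  finally show ?thesis .
qed

text \<open>The proof expands \<open>0 \<le> \<parallel>u - s\<parallel>\<^sup>2\<close> for the orthogonal projection \<open>s\<close> of \<open>u\<close>
  onto the span of the orthonormal family \<open>x\<close>.\<close>
lemma bessel_inequality:
  fixes u :: "nat \<Rightarrow> complex" and x :: "nat \<Rightarrow> nat \<Rightarrow> complex"
  assumes orth: "\<And>i j. i < k \<Longrightarrow> j < k \<Longrightarrow> (\<Sum>a<n. x i a * cnj (x j a)) = (if i = j then 1 else 0)"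
  shows "(\<Sum>i<k. (cmod (\<Sum>a<n. cnj (u a) * x i a))\<^sup>2) \<le> (\<Sum>a<n. (cmod (u a))\<^sup>2)"
proof -
  define c where "c i = (\<Sum>a<n. cnj (x i a) * u a)" for i
  define s where "s a = (\<Sum>i<k. c i * x i a)" for a
  have S1: "(\<Sum>a<n. s a * cnj (u a)) = (\<Sum>i<k. c i * cnj (c i))"
  proof -
    have "(\<Sum>a<n. s a * cnj (u a)) = (\<Sum>i<k. \<Sum>a<n. c i * (x i a * cnj (u a)))"
      unfolding s_def by (simp add: sum_distrib_right mult.assoc sum.swap[of _ "{..<n}"])
    also have "\<dots> = (\<Sum>i<k. c i * cnj (c i))"
      unfolding c_def by (simp add: sum_distrib_left mult.commute)
    finally show ?thesis .
  qed
  have S2: "(\<Sum>a<n. s a * cnj (s a)) = (\<Sum>i<k. c i * cnj (c i))"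
    unfolding s_def by (rule sum_orthonormal_combination_sq[OF orth])
  have "complex_of_real (\<Sum>a<n. (cmod (u a - s a))\<^sup>2) = (\<Sum>a<n. (u a - s a) * cnj (u a - s a))"
    by (simp add: complex_norm_square del: of_real_power)
  also have "\<dots> = (\<Sum>a<n. u a * cnj (u a)) - cnj (\<Sum>a<n. s a * cnj (u a))
      - (\<Sum>a<n. s a * cnj (u a)) + (\<Sum>a<n. s a * cnj (s a))"
    by (simp add: algebra_simps sum_subtractf sum.distrib)
  also have "\<dots> = complex_of_real ((\<Sum>a<n. (cmod (u a))\<^sup>2) - (\<Sum>i<k. (cmod (c i))\<^sup>2))"
    unfolding S1 S2 by (simp add: complex_norm_square mult.commute del: of_real_power)
  finally have "(\<Sum>a<n. (cmod (u a))\<^sup>2) - (\<Sum>i<k. (cmod (c i))\<^sup>2) = (\<Sum>a<n. (cmod (u a - s a))\<^sup>2)"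
    using of_real_eq_iff by metis
  moreover have "cmod (\<Sum>a<n. cnj (u a) * x i a) = cmod (c i)" for i
    using complex_mod_cnj[of "c i"] unfolding c_def by (simp add: mult.commute)
  moreover have "0 \<le> (\<Sum>a<n. (cmod (u a - s a))\<^sup>2)" by (intro sum_nonneg) simp
  ultimately show ?thesis by simp
qed

lemma quadratic_form_unit_eigenvector:
  fixes A :: "complex mat"
  assumes "x \<in> carrier_vec n" "A \<in> carrier_mat n n" "A *\<^sub>v x = c \<cdot>\<^sub>v x" "x \<bullet>c x = 1"
  shows "conjugate x \<bullet> (A *\<^sub>v x) = c"
proof -
  have "conjugate x \<bullet> (A *\<^sub>v x) = c * (x \<bullet>c x)"
    using assms(1) unfolding assms(3) by (simp add: scalar_prod_def sum_distrib_left ac_simps)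
  then show ?thesis using assms(4) by simp
qed

lemma orthonormal_tuples_carrier: "xs \<in> orthonormal_tuples n k \<Longrightarrow> i < k \<Longrightarrow> xs ! i \<in> carrier_vec n"
  by (auto simp: orthonormal_tuples_def)

lemma orthonormal_tuples_cscalar:
  "xs \<in> orthonormal_tuples n k \<Longrightarrow> i < k \<Longrightarrow> j < k \<Longrightarrow> xs ! i \<bullet>c xs ! j = (if i = j then 1 else 0)"
  by (simp add: orthonormal_tuples_def)

context unitary_eigenbasis
begin

lemma carrier_U: "U \<in> carrier_mat n n"
  using unitary by (simp add: unitary_def)

lemma orthonormal_columns:
  assumes "m < n" "m' < n"
  shows "(\<Sum>a<n. cnj (U $$ (a, m)) * U $$ (a, m')) = (if m = m' then 1 else 0)"
proof -
  have "(\<Sum>a<n. cnj (U $$ (a, m)) * U $$ (a, m')) = (mat_adjoint U * U) $$ (m, m')"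
    using index_mult_mat_sum[OF mat_adjoint_carrier[OF carrier_U] carrier_U assms] carrier_U assms
    by simp
  then show ?thesis using unitary assms by (simp add: unitary_def)
qed

lemma orthonormal_rows:
  assumes "a < n" "b < n"
  shows "(\<Sum>m<n. U $$ (a, m) * cnj (U $$ (b, m))) = (if a = b then 1 else 0)"
proof -
  have "(\<Sum>m<n. U $$ (a, m) * cnj (U $$ (b, m))) = (U * mat_adjoint U) $$ (a, b)"
    using index_mult_mat_sum[OF carrier_U mat_adjoint_carrier[OF carrier_U] assms] carrier_U assms
    by simp
  then show ?thesis using unitary_right_inverse[OF unitary] assms by simp
qed

lemma eigen_sum: "a < n \<Longrightarrow> m < n \<Longrightarrow> (\<Sum>b<n. A $$ (a, b) * U $$ (b, m)) = \<mu> m * U $$ (a, m)"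
  using index_mult_mat_vec_sum[OF carrier, of "col U m" a] eigen[of m] carrier_U by simp

definition coord :: "nat \<Rightarrow> complex vec \<Rightarrow> complex" where
  "coord m x = (\<Sum>a<n. cnj (U $$ (a, m)) * x $ a)"

lemma coord_expansion:
  assumes "x \<in> carrier_vec n" "a < n"
  shows "x $ a = (\<Sum>m<n. coord m x * U $$ (a, m))"
proof -
  have "(\<Sum>m<n. coord m x * U $$ (a, m)) = (\<Sum>b<n. x $ b * (\<Sum>m<n. U $$ (a, m) * cnj (U $$ (b, m))))"
    unfolding coord_def sum_distrib_right sum_distrib_left by (subst sum.swap) (simp add: ac_simps)
  also have "\<dots> = x $ a" using assms orthonormal_rows by (simp add: if_distrib[of "times _"] cong: if_cong)
  finally show ?thesis by simp
qed

lemma mult_mat_vec_coord: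
  assumes x: "x \<in> carrier_vec n" and a: "a < n"
  shows "(A *\<^sub>v x) $ a = (\<Sum>m<n. coord m x * (\<mu> m * U $$ (a, m)))"
proof -
  have "(A *\<^sub>v x) $ a = (\<Sum>b<n. A $$ (a, b) * (\<Sum>m<n. coord m x * U $$ (b, m)))"
    using index_mult_mat_vec_sum[OF carrier x a] coord_expansion[OF x] by simp
  also have "\<dots> = (\<Sum>m<n. coord m x * (\<Sum>b<n. A $$ (a, b) * U $$ (b, m)))"
    unfolding sum_distrib_left by (subst sum.swap) (simp add: ac_simps)
  finally show ?thesis using eigen_sum a by simp
qed

lemma sum_cnj_coord:
  assumes y: "y \<in> carrier_vec n" and f: "\<And>a. a < n \<Longrightarrow> f a = (\<Sum>m<n. d m * U $$ (a, m))"
  shows "(\<Sum>a<n. cnj (y $ a) * f a) = (\<Sum>m<n. d m * cnj (coord m y))"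
proof -
  have "(\<Sum>a<n. cnj (y $ a) * f a) = (\<Sum>a<n. \<Sum>m<n. d m * (cnj (y $ a) * U $$ (a, m)))"
    by (intro sum.cong refl) (simp add: f sum_distrib_left ac_simps)
  also have "\<dots> = (\<Sum>m<n. \<Sum>a<n. d m * (cnj (y $ a) * U $$ (a, m)))"
    by (rule sum.swap)
  finally show ?thesis by (simp add: coord_def sum_distrib_left ac_simps)
qed

lemma quadratic_form_coord:
  assumes x: "x \<in> carrier_vec n"
  shows "Re (conjugate x \<bullet> (A *\<^sub>v x)) = (\<Sum>m<n. \<mu> m * (cmod (coord m x))\<^sup>2)"
proof -
  have "conjugate x \<bullet> (A *\<^sub>v x) = (\<Sum>a<n. cnj (x $ a) * (A *\<^sub>v x) $ a)"
    using x carrier by (simp add: scalar_prod_def atLeast0LessThan)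
  also have "\<dots> = (\<Sum>m<n. coord m x * \<mu> m * cnj (coord m x))"
    using sum_cnj_coord[OF x, of "\<lambda>a. (A *\<^sub>v x) $ a" "\<lambda>m. coord m x * \<mu> m"] mult_mat_vec_coord[OF x]
    by (simp add: ac_simps)
  also have "\<dots> = (\<Sum>m<n. complex_of_real (\<mu> m * (cmod (coord m x))\<^sup>2))"
    by (simp add: complex_norm_square ac_simps del: of_real_power)
  finally show ?thesis by simp
qed

lemma parseval:
  assumes x: "x \<in> carrier_vec n"
  shows "(\<Sum>m<n. (cmod (coord m x))\<^sup>2) = Re (x \<bullet>c x)"
proof -
  have "x \<bullet>c x = (\<Sum>a<n. cnj (x $ a) * x $ a)"
    using x by (simp add: scalar_prod_def atLeast0LessThan mult.commute)
  also have "\<dots> = (\<Sum>m<n. coord m x * cnj (coord m x))"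
    by (rule sum_cnj_coord[OF x]) (rule coord_expansion[OF x])
  also have "\<dots> = (\<Sum>m<n. complex_of_real ((cmod (coord m x))\<^sup>2))"
    by (simp add: complex_norm_square del: of_real_power)
  finally show ?thesis by simp
qed

lemma coord_bessel:
  assumes xs: "xs \<in> orthonormal_tuples n k" and m: "m < n"
  shows "(\<Sum>i<k. (cmod (coord m (xs ! i)))\<^sup>2) \<le> 1"
proof -
  have "(\<Sum>a<n. xs ! i $ a * cnj (xs ! j $ a)) = (if i = j then 1 else 0)" if "i < k" "j < k" for i j
    using orthonormal_tuples_cscalar[OF xs that] orthonormal_tuples_carrier[OF xs that(2)]
    by (simp add: scalar_prod_def atLeast0LessThan)
  then have "(\<Sum>i<k. (cmod (coord m (xs ! i)))\<^sup>2) \<le> (\<Sum>a<n. (cmod (U $$ (a, m)))\<^sup>2)"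
    unfolding coord_def using bessel_inequality[where x = "\<lambda>i a. xs ! i $ a" and u = "\<lambda>a. U $$ (a, m)"] by simp
  also have "(\<Sum>a<n. (cmod (U $$ (a, m)))\<^sup>2) = 1"
    using orthonormal_columns[OF m m] of_real_eq_1_iff
    by (metis (no_types, lifting) complex_norm_square mult.commute of_real_sum sum.cong)
  finally show ?thesis .
qed

lemma eigenvector_of_coord_support:
  assumes x: "x \<in> carrier_vec n" and supp: "\<And>m. m < n \<Longrightarrow> coord m x \<noteq> 0 \<Longrightarrow> \<mu> m = c"
  shows "A *\<^sub>v x = complex_of_real c \<cdot>\<^sub>v x"
proof (rule eq_vecI)
  fix a assume "a < dim_vec (complex_of_real c \<cdot>\<^sub>v x)"
  then have a: "a < n" using x by simp
  have "(A *\<^sub>v x) $ a = (\<Sum>m<n. coord m x * (complex_of_real c * U $$ (a, m)))"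
    unfolding mult_mat_vec_coord[OF x a] using supp by (intro sum.cong) force+
  also have "\<dots> = complex_of_real c * x $ a"
    using coord_expansion[OF x a] by (simp add: sum_distrib_left ac_simps)
  finally show "(A *\<^sub>v x) $ a = (complex_of_real c \<cdot>\<^sub>v x) $ a" using a x by simp
qed (use carrier x in simp)

lemma weighted_quadratic_forms:
  assumes xs: "xs \<in> orthonormal_tuples n k" and kn: "k \<le> n"
    and antitone: "\<And>i j. i \<le> j \<Longrightarrow> j < n \<Longrightarrow> \<mu> j \<le> \<mu> i"
    and w: "\<And>i. i < k \<Longrightarrow> w (Suc i) < w i" and wk: "w k = 0"
  shows "(\<Sum>i<k. w i * Re (conjugate (xs ! i) \<bullet> (A *\<^sub>v xs ! i))) \<le> (\<Sum>i<k. w i * \<mu> i)"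
    and "(\<Sum>i<k. w i * Re (conjugate (xs ! i) \<bullet> (A *\<^sub>v xs ! i))) = (\<Sum>i<k. w i * \<mu> i) \<Longrightarrow> i < k
      \<Longrightarrow> A *\<^sub>v xs ! i = complex_of_real (\<mu> i) \<cdot>\<^sub>v xs ! i"
proof -
  define p where "p i m = (cmod (coord m (xs ! i)))\<^sup>2" for i m
  have xs_i: "\<And>i. i < k \<Longrightarrow> xs ! i \<in> carrier_vec n" using orthonormal_tuples_carrier[OF xs] .
  have quad: "(\<Sum>i<k. w i * Re (conjugate (xs ! i) \<bullet> (A *\<^sub>v xs ! i))) = (\<Sum>i<k. w i * (\<Sum>m<n. \<mu> m * p i m))"
    unfolding p_def by (intro sum.cong refl) (simp add: quadratic_form_coord xs_i)
  have p0: "\<And>i m. i < k \<Longrightarrow> m < n \<Longrightarrow> 0 \<le> p i m" unfolding p_def by simp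
  have prow: "\<And>i. i < k \<Longrightarrow> (\<Sum>m<n. p i m) = 1"
    unfolding p_def using parseval[OF xs_i] orthonormal_tuples_cscalar[OF xs] by simp
  have pcol: "\<And>m. m < n \<Longrightarrow> (\<Sum>i<k. p i m) \<le> 1" unfolding p_def using coord_bessel[OF xs] .
  show "(\<Sum>i<k. w i * Re (conjugate (xs ! i) \<bullet> (A *\<^sub>v xs ! i))) \<le> (\<Sum>i<k. w i * \<mu> i)"
    unfolding quad using weighted_rows_le[where lam = \<mu> and p = p, OF kn antitone p0 prow pcol] w wk by (simp add: less_imp_le)
  assume "(\<Sum>i<k. w i * Re (conjugate (xs ! i) \<bullet> (A *\<^sub>v xs ! i))) = (\<Sum>i<k. w i * \<mu> i)" and i: "i < k"
  then have "\<And>m. m < n \<Longrightarrow> 0 < p i m \<Longrightarrow> \<mu> m = \<mu> i"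
    unfolding quad using weighted_rows_eq_imp[where lam = \<mu> and p = p, OF kn antitone p0 prow pcol w wk] by blast
  then show "A *\<^sub>v xs ! i = complex_of_real (\<mu> i) \<cdot>\<^sub>v xs ! i"
    using eigenvector_of_coord_support[OF xs_i[OF i]] unfolding p_def by simp
qed

lemma weighted_quadratic_forms_eigen:
  assumes xs: "xs \<in> orthonormal_tuples n k"
    and ev: "\<And>i. i < k \<Longrightarrow> A *\<^sub>v xs ! i = complex_of_real (\<mu> i) \<cdot>\<^sub>v xs ! i"
  shows "(\<Sum>i<k. w i * Re (conjugate (xs ! i) \<bullet> (A *\<^sub>v xs ! i))) = (\<Sum>i<k. w i * \<mu> i)"
proof (intro sum.cong refl)
  fix i assume "i \<in> {..<k}"
  then show "w i * Re (conjugate (xs ! i) \<bullet> (A *\<^sub>v xs ! i)) = w i * \<mu> i"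
    using quadratic_form_unit_eigenvector[OF orthonormal_tuples_carrier[OF xs] carrier ev]
      orthonormal_tuples_cscalar[OF xs] by simp
qed

lemma eigenbasis_tuple:
  assumes "k \<le> n"
  shows "map (col U) [0..<k] \<in> orthonormal_tuples n k"
    and "\<And>i. i < k \<Longrightarrow> A *\<^sub>v (map (col U) [0..<k] ! i) = complex_of_real (\<mu> i) \<cdot>\<^sub>v (map (col U) [0..<k] ! i)"
proof -
  have "col U i \<bullet>c col U j = (if i = j then 1 else 0)" if "i < n" "j < n" for i j
  proof -
    have "col U i \<bullet>c col U j = cnj (\<Sum>a<n. cnj (U $$ (a, i)) * U $$ (a, j))"
      using carrier_U that by (simp add: scalar_prod_def atLeast0LessThan mult.commute)
    then show ?thesis using orthonormal_columns[OF that] by simp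
  qed
  then show "map (col U) [0..<k] \<in> orthonormal_tuples n k"
    using assms carrier_U by (auto simp: orthonormal_tuples_def)
  show "A *\<^sub>v (map (col U) [0..<k] ! i) = complex_of_real (\<mu> i) \<cdot>\<^sub>v (map (col U) [0..<k] ! i)" if "i < k" for i
    using eigen[of i] that assms by simp
qed

end

section \<open>The quantum score\<close>

lemma hs_inner_outer:
  assumes "\<rho> \<in> carrier_mat n n" "x \<in> carrier_vec n"
  shows "hs_inner (outer n x) \<rho> = conjugate x \<bullet> (\<rho> *\<^sub>v x)"
proof -
  have "hs_inner (outer n x) \<rho> = (\<Sum>i<n. \<Sum>a<n. cnj (x $ a) * (\<rho> $$ (a, i) * x $ i))"
    using assms(1) by (simp add: hs_inner_def mtrace_def outer_def scalar_prod_def atLeast0LessThan ac_simps)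
  also have "\<dots> = (\<Sum>a<n. cnj (x $ a) * (\<Sum>i<n. \<rho> $$ (a, i) * x $ i))"
    by (subst sum.swap) (simp add: sum_distrib_left)
  finally show ?thesis using assms by (simp add: scalar_prod_def atLeast0LessThan)
qed

lemma hs_inner_weighted_outer:
  assumes "\<rho> \<in> carrier_mat n n"
  shows "hs_inner (weighted_outer n k v xs) \<rho> = (\<Sum>j<k. complex_of_real (v (Suc j)) * hs_inner (outer n (xs ! j)) \<rho>)"
proof -
  have "hs_inner (weighted_outer n k v xs) \<rho>
      = (\<Sum>i<n. \<Sum>a<n. \<Sum>j<k. complex_of_real (v (Suc j)) * (cnj (xs ! j $ a) * (\<rho> $$ (a, i) * xs ! j $ i)))"
    using assms by (simp add: hs_inner_def mtrace_def weighted_outer_def scalar_prod_def atLeast0LessThan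
        sum_distrib_right sum_distrib_left ac_simps)
  also have "\<dots> = (\<Sum>j<k. \<Sum>i<n. \<Sum>a<n. complex_of_real (v (Suc j)) * (cnj (xs ! j $ a) * (\<rho> $$ (a, i) * xs ! j $ i)))"
    by (subst sum.swap[of _ "{..<n}"], subst sum.swap) simp
  also have "\<dots> = (\<Sum>j<k. complex_of_real (v (Suc j)) * hs_inner (outer n (xs ! j)) \<rho>)"
    using assms by (simp add: hs_inner_def mtrace_def outer_def scalar_prod_def atLeast0LessThan
        sum_distrib_left ac_simps)
  finally show ?thesis .
qed

lemma qscore_top_mu:
  assumes "v (Suc k) = 0"
  shows "qscore_exp {1..k+1} (\<lambda>_ y. v y) (top_mu n k) xs \<rho>
    = (\<Sum>j<k. complex_of_real (v (Suc j)) * hs_inner (outer n (xs ! j)) \<rho>)"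
proof -
  have "{1..k+1} = insert (Suc k) (Suc ` {..<k})" by (auto simp: image_Suc_lessThan)
  then have "qscore_exp {1..k+1} (\<lambda>_ y. v y) (top_mu n k) xs \<rho>
      = (\<Sum>y\<in>Suc ` {..<k}. hs_inner (top_mu n k xs y) \<rho> * complex_of_real (v y))"
    using assms by (simp add: qscore_exp_def sum.insert_if)
  also have "\<dots> = (\<Sum>j<k. complex_of_real (v (Suc j)) * hs_inner (outer n (xs ! j)) \<rho>)"
    by (simp add: sum.reindex top_mu_def mult.commute)
  finally show ?thesis .
qed

lemma re_qscore_top_mu:
  assumes "\<rho> \<in> carrier_mat n n" "xs \<in> orthonormal_tuples n k" "v (Suc k) = 0"
  shows "Re (qscore_exp {1..k+1} (\<lambda>_ y. v y) (top_mu n k) xs \<rho>)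
    = (\<Sum>i<k. v (Suc i) * Re (conjugate (xs ! i) \<bullet> (\<rho> *\<^sub>v xs ! i)))"
  unfolding qscore_top_mu[of v k, OF assms(3)]
  using hs_inner_outer[OF assms(1) orthonormal_tuples_carrier[OF assms(2)]] by simp

text \<open>The first \<open>k\<close> columns of a sorted eigenbasis attain the bound of Ky Fan's inequality, and a
  maximiser must attain it with equality.\<close>
lemma qargmax_top_mu:
  fixes v :: "nat \<Rightarrow> real"
  assumes kn: "k \<le> n" and v_dec: "\<forall>i. 1 \<le> i \<and> i < k \<longrightarrow> v (Suc i) < v i"
    and vk: "0 < v k" and vk1: "v (Suc k) = 0" and \<rho>: "density n \<rho>"
  shows "qargmax (orthonormal_tuples n k) {1..k+1} (\<lambda>_ y. v y) (top_mu n k) \<rho>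
    = {xs \<in> orthonormal_tuples n k. \<forall>i<k. \<rho> *\<^sub>v (xs ! i) = complex_of_real (eig_desc \<rho> (Suc i)) \<cdot>\<^sub>v (xs ! i)}"
    (is "_ = ?eig")
proof -
  have \<rho>c: "\<rho> \<in> carrier_mat n n" and h: "hermitian \<rho>" using \<rho> by (auto simp: density_def hermitian_def)
  obtain U where "unitary_eigenbasis n \<rho> U (\<lambda>m. eig_desc \<rho> (Suc m))"
    and antitone: "\<And>i j. i \<le> j \<Longrightarrow> j < n \<Longrightarrow> eig_desc \<rho> (Suc j) \<le> eig_desc \<rho> (Suc i)"
    using hermitian_sorted_eigenbasis[OF \<rho>c h] by blast
  then interpret unitary_eigenbasis n \<rho> U "\<lambda>m. eig_desc \<rho> (Suc m)" by simp
  let ?R = "orthonormal_tuples n k"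
  define score where "score xs = Re (qscore_exp {1..k+1} (\<lambda>_ y. v y) (top_mu n k) xs \<rho>)" for xs
  define F where "F = (\<Sum>i<k. v (Suc i) * eig_desc \<rho> (Suc i))"
  have w: "v (Suc (Suc i)) < v (Suc i)" if "i < k" for i
    using v_dec vk vk1 that by (cases "Suc i = k") auto
  note score = re_qscore_top_mu[of \<rho> n _ k v, OF \<rho>c _ vk1, folded score_def]
  note bound = weighted_quadratic_forms[where w = "\<lambda>i. v (Suc i)", OF _ kn antitone w vk1]
  have score_eig: "score xs = F" if "xs \<in> ?eig" for xs
    using that score weighted_quadratic_forms_eigen unfolding F_def by simp
  define xs0 where "xs0 = map (col U) [0..<k]"
  have xs0: "xs0 \<in> ?eig" unfolding xs0_def using eigenbasis_tuple[OF kn] by simp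
  have max: "score xs \<le> F" if "xs \<in> ?R" for xs
    using bound(1)[OF that] score[OF that] unfolding F_def by simp
  show ?thesis
  proof (intro equalityI subsetI)
    fix xs assume "xs \<in> qargmax ?R {1..k+1} (\<lambda>_ y. v y) (top_mu n k) \<rho>"
    then have xs: "xs \<in> ?R" and "\<forall>r \<in> ?R. score r \<le> score xs"
      unfolding qargmax_def score_def by simp_all
    then have "score xs = F" using max[OF xs] xs0 score_eig[OF xs0] by force
    then have "(\<Sum>i<k. v (Suc i) * Re (conjugate (xs ! i) \<bullet> (\<rho> *\<^sub>v xs ! i))) = F"
      using score[OF xs] by simp
    then have "\<forall>i<k. \<rho> *\<^sub>v xs ! i = complex_of_real (eig_desc \<rho> (Suc i)) \<cdot>\<^sub>v xs ! i"
      using bound(2)[OF xs] unfolding F_def by blast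
    then show "xs \<in> ?eig" using xs by simp
  next
    fix xs assume eig: "xs \<in> ?eig"
    then have "\<forall>r \<in> ?R. score r \<le> score xs" using max score_eig[OF eig] by simp
    then show "xs \<in> qargmax ?R {1..k+1} (\<lambda>_ y. v y) (top_mu n k) \<rho>"
      using eig unfolding qargmax_def score_def by simp
  qed
qed

theorem mainTheorem12:
  fixes n k :: nat and v :: "nat \<Rightarrow> real"
  assumes "1 \<le> k" and "k \<le> n"
    and "\<forall>i. 1 \<le> i \<and> i < k \<longrightarrow> v (Suc i) < v i"
    and "0 < v k" and "v (Suc k) = 0"
  shows "(\<forall>\<rho> xs. density n \<rho> \<longrightarrow> xs \<in> orthonormal_tuples n k \<longrightarrow>
            qscore_exp {1..k+1} (\<lambda>_ y. v y) (top_mu n k) xs \<rho> = hs_inner (weighted_outer n k v xs) \<rho>)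
       \<and> (\<forall>\<rho>. density n \<rho> \<longrightarrow>
            qargmax (orthonormal_tuples n k) {1..k+1} (\<lambda>_ y. v y) (top_mu n k) \<rho>
              = {xs \<in> orthonormal_tuples n k. \<forall>i<k. \<rho> *\<^sub>v (xs ! i) = complex_of_real (eig_desc \<rho> (Suc i)) \<cdot>\<^sub>v (xs ! i)})
       \<and> elicits n (orthonormal_tuples n k) {1..k+1} (\<lambda>_ y. v y) (top_mu n k) (Gamma_top n k)"
proof -
  have score: "qscore_exp {1..k+1} (\<lambda>_ y. v y) (top_mu n k) xs \<rho> = hs_inner (weighted_outer n k v xs) \<rho>"
    if "density n \<rho>" for \<rho> xs
    using qscore_top_mu[of v k, OF assms(5)] hs_inner_weighted_outer that by (simp add: density_def)
  have argmax: "qargmax (orthonormal_tuples n k) {1..k+1} (\<lambda>_ y. v y) (top_mu n k) \<rho>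
      = {xs \<in> orthonormal_tuples n k. \<forall>i<k. \<rho> *\<^sub>v (xs ! i) = complex_of_real (eig_desc \<rho> (Suc i)) \<cdot>\<^sub>v (xs ! i)}"
    if "density n \<rho>" for \<rho>
    using qargmax_top_mu[OF assms(2-5) that] .
  then have "elicits n (orthonormal_tuples n k) {1..k+1} (\<lambda>_ y. v y) (top_mu n k) (Gamma_top n k)"
    by (simp add: elicits_def Gamma_top_def)
  then show ?thesis using score argmax by blast
qed

end
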